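(* Let the configuration space be $\mathbb{R}^n$ with each coordinate an independent double integrator $\ddot q_i=a_i$, $a_i\in[-1,1]$, and let $q_I,q_G\in\mathcal{C}_{free}$. Any piecewise-linear path $\tau:[0,1]\to\mathcal{C}_{free}$ with $\tau(0)=q_I$, $\tau(1)=q_G$ is converted by the bang-bang transform into an acceleration control $a(\cdot):[0,t_F]\to[-1,1]^n$ whose state trajectory from $x_I=(q_I,\mathbf{0})$ lies in $X_{free}=\{(q,\dot q): q\in\mathcal{C}_{free}\}$ and reaches $x_G=(q_G,\mathbf{0})$ at time $t_F$; i.e., it yields a solution to the rest-to-rest kinodynamic planning problem for the double integrator system.
   Context: $\mathcal{C}_{free}$ is the open set of collision-free configurations. Bang-bang transform: for each edge of $\tau$ from vertex $q$ to the next vertex $q'$, let $v=q'-q$, $\hat v=v/\|v\|$, $s=\max_i|\hat v_i|$, acceleration vector $a=\hat v/s$ and $t=\sqrt{s\|v\|}$; the edge control is apply $a$ for time $t$ then $-a$ for time $t$. The edge controls are concatenated in order along the path. *)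

theory Defs
  imports "HOL-Analysis.Analysis"
begin

text \<open>Configurations are vectors in real^'n. A piecewise-linear path is given by
its list of vertices; each coordinate is a double integrator with |a_i| <= 1.\<close>

definition edge_s :: "real^'n \<Rightarrow> real^'n \<Rightarrow> real" where
  "edge_s q q' = (let v = q' - q; vh = v /\<^sub>R norm v in Max (range (\<lambda>i. \<bar>vh $ i\<bar>)))"

definition edge_accel :: "real^'n \<Rightarrow> real^'n \<Rightarrow> real^'n" where
  "edge_accel q q' = (let v = q' - q; vh = v /\<^sub>R norm v in vh /\<^sub>R edge_s q q')"

definition edge_time :: "real^'n \<Rightarrow> real^'n \<Rightarrow> real" where
  "edge_time q q' = sqrt (edge_s q q' * norm (q' - q))"

fun bang_bang :: "(real^'n) list \<Rightarrow> real \<Rightarrow> real^'n" where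
  "bang_bang (q # q' # rest) t =
     (if t < edge_time q q' then edge_accel q q'
      else if t < 2 * edge_time q q' then - edge_accel q q'
      else bang_bang (q' # rest) (t - 2 * edge_time q q'))"
| "bang_bang _ t = 0"

fun bang_bang_time :: "(real^'n) list \<Rightarrow> real" where
  "bang_bang_time (q # q' # rest) = 2 * edge_time q q' + bang_bang_time (q' # rest)"
| "bang_bang_time _ = 0"

definition di_velocity :: "(real \<Rightarrow> real^'n) \<Rightarrow> real \<Rightarrow> real^'n" where
  "di_velocity u t = integral {0..t} u"

definition di_position :: "real^'n \<Rightarrow> (real \<Rightarrow> real^'n) \<Rightarrow> real \<Rightarrow> real^'n" where
  "di_position q0 u t = q0 + integral {0..t} (di_velocity u)"

end

theory Submission
  imports Defs
begin

text \<open>Starting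
at rest, the velocity is the tent function bang_velocity \<tau> t times a and the displacement is
bang_position \<tau> t times a, where bang_position \<tau> increases from 0 to \<tau>^2 on [0, 2\<tau>]. The choice
of a and \<tau> gives \<tau>^2 a = q' - q, so the edge ends at rest at q' and in between the
configuration stays on the segment from q to q'. The motion along the whole path is obtained by
concatenating the edges, shifting time by each edge duration 2\<tau>.\<close>

lemma has_integral_shifted_concat:
  fixes f g h :: "real \<Rightarrow> 'a::banach"
  assumes "0 \<le> c" "0 \<le> t"
    and f: "\<And>s. s \<in> {0..c} \<Longrightarrow> (f has_integral H s) {0..s}"
    and g: "\<And>s. 0 \<le> s \<Longrightarrow> (g has_integral G s) {0..s}"
    and hf: "\<And>s. s \<in> {0..<c} \<Longrightarrow> h s = f s"
    and hg: "\<And>s. c < s \<Longrightarrow> h s = g (s - c)"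
    and H: "\<And>s. c < s \<Longrightarrow> H s = H c + G (s - c)"
  shows "(h has_integral H t) {0..t}"
proof -
  have h_head: "(h has_integral H s) {0..s}" if "s \<in> {0..c}" for s
    by (rule has_integral_spike_finite[of "{c}" _ _ f]) (use that f hf in auto)
  show ?thesis
  proof (cases "t \<le> c")
    case True
    then show ?thesis using h_head \<open>0 \<le> t\<close> by simp
  next
    case False
    have g_shifted: "((\<lambda>s. g (s - c)) has_integral G (t - c)) {c..t}"
      using has_integral_shift_real_ivl[OF g[of "t - c"], of "- c"] False by simp
    have "(h has_integral G (t - c)) {c..t}"
      by (rule has_integral_spike_finite[OF _ _ g_shifted, of "{c}"]) (use hg in auto)
    from has_integral_combine[OF \<open>0 \<le> c\<close> _ h_head this] False \<open>0 \<le> c\<close>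
    show ?thesis by (simp add: H)
  qed
qed

lemma add_scaleR_in_closed_segment:
  fixes x v :: "'a::real_vector"
  assumes "0 \<le> p" "p \<le> c"
  shows "x + p *\<^sub>R v \<in> closed_segment x (x + c *\<^sub>R v)"
proof (cases "c = 0")
  case False
  have "x + p *\<^sub>R v = (1 - p / c) *\<^sub>R x + (p / c) *\<^sub>R (x + c *\<^sub>R v)"
    using False by (simp add: algebra_simps)
  moreover have "0 \<le> p / c" "p / c \<le> 1" using assms False by auto
  ultimately show ?thesis unfolding in_segment by blast
qed (use assms in simp)

lemma all_segments_Cons_Cons:
  "(\<forall>k < length (q # q' # rest) - 1. P ((q # q' # rest) ! k) ((q # q' # rest) ! Suc k))
    \<longleftrightarrow> P q q' \<and> (\<forall>k < length (q' # rest) - 1. P ((q' # rest) ! k) ((q' # rest) ! Suc k))"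
  by (auto simp: less_Suc_eq_0_disj)

definition bang_velocity :: "real \<Rightarrow> real \<Rightarrow> real" where
  "bang_velocity \<tau> t = (if t \<le> \<tau> then t else 2 * \<tau> - t)"

definition bang_position :: "real \<Rightarrow> real \<Rightarrow> real" where
  "bang_position \<tau> t = (if t \<le> \<tau> then t\<^sup>2 / 2 else \<tau>\<^sup>2 - (2 * \<tau> - t)\<^sup>2 / 2)"

lemma has_integral_bang_velocity:
  assumes "0 \<le> \<tau>" "0 \<le> t"
  shows "((\<lambda>s. if s < \<tau> then 1 else -1) has_integral bang_velocity \<tau> t) {0..t}"
proof (rule has_integral_shifted_concat[OF assms, where f = "\<lambda>_. 1" and g = "\<lambda>_. -1"])
  show "((\<lambda>_. 1) has_integral bang_velocity \<tau> s) {0..s}" if "s \<in> {0..\<tau>}" for s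
    using that has_integral_const_real[of "1::real" 0 s] by (simp add: bang_velocity_def)
  show "((\<lambda>_. -1) has_integral - s) {0..s}" if "0 \<le> s" for s :: real
    using that has_integral_const_real[of "-1::real" 0 s] by simp
qed (auto simp: bang_velocity_def)

lemma has_integral_bang_position:
  assumes "0 \<le> \<tau>" "0 \<le> t"
  shows "(bang_velocity \<tau> has_integral bang_position \<tau> t) {0..t}"
proof (rule has_integral_shifted_concat[OF assms, where f = "\<lambda>s. s" and g = "\<lambda>s. \<tau> - s"])
  show "((\<lambda>s. s) has_integral bang_position \<tau> s) {0..s}" if "s \<in> {0..\<tau>}" for s
    using that ident_has_integral[of 0 s] by (simp add: bang_position_def)
  show "((\<lambda>s. \<tau> - s) has_integral \<tau> * s - s\<^sup>2 / 2) {0..s}" if "0 \<le> s" for s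
    using has_integral_diff[OF has_integral_const_real[of \<tau> 0 s] ident_has_integral[of 0 s]] that
    by (simp add: mult.commute)
  show "bang_position \<tau> s = bang_position \<tau> \<tau> + (\<tau> * (s - \<tau>) - (s - \<tau>)\<^sup>2 / 2)" if "\<tau> < s" for s
    using that unfolding bang_position_def power2_eq_square
    by (simp add: algebra_simps diff_divide_distrib add_divide_distrib)
qed (auto simp: bang_velocity_def)

lemma bang_position_bounds:
  assumes "t \<in> {0..2 * \<tau>}"
  shows "0 \<le> bang_position \<tau> t \<and> bang_position \<tau> t \<le> \<tau>\<^sup>2"
proof (cases "t \<le> \<tau>")
  case True
  then have "t\<^sup>2 \<le> \<tau>\<^sup>2" using assms by (auto intro: power_mono)
  then have "t\<^sup>2 / 2 \<le> \<tau>\<^sup>2" using zero_le_power2[of \<tau>] by linarith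
  then show ?thesis using True by (simp add: bang_position_def)
next
  case False
  then have "(2 * \<tau> - t)\<^sup>2 \<le> \<tau>\<^sup>2" using assms by (auto intro: power_mono)
  then have "(2 * \<tau> - t)\<^sup>2 / 2 \<le> \<tau>\<^sup>2" using zero_le_power2[of \<tau>] by linarith
  then show ?thesis using False by (simp add: bang_position_def)
qed

lemma bang_velocity_end: "0 \<le> \<tau> \<Longrightarrow> bang_velocity \<tau> (2 * \<tau>) = 0"
  by (simp add: bang_velocity_def)

lemma bang_position_end: "0 \<le> \<tau> \<Longrightarrow> bang_position \<tau> (2 * \<tau>) = \<tau>\<^sup>2"
  by (simp add: bang_position_def)

lemma abs_unit_component_le_edge_s: "\<bar>((q' - q) /\<^sub>R norm (q' - q)) $ i\<bar> \<le> edge_s q q'"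
  unfolding edge_s_def Let_def by (rule Max_ge) auto

lemma edge_s_pos: "q \<noteq> q' \<Longrightarrow> 0 < edge_s q q'"
proof -
  assume "q \<noteq> q'"
  then obtain i where "(q' - q) $ i \<noteq> 0" by (metis right_minus_eq vec_eq_iff zero_index)
  then have "0 < \<bar>((q' - q) /\<^sub>R norm (q' - q)) $ i\<bar>" using \<open>q \<noteq> q'\<close> by simp
  then show ?thesis using abs_unit_component_le_edge_s by (rule less_le_trans)
qed

lemma edge_s_nonneg: "0 \<le> edge_s q q'"
  using abs_unit_component_le_edge_s[of q' q] by (rule order_trans[OF abs_ge_zero])

lemma edge_time_nonneg: "0 \<le> edge_time q q'"
  by (simp add: edge_time_def edge_s_nonneg)

lemma abs_edge_accel_le_1: "\<bar>edge_accel q q' $ i\<bar> \<le> 1"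
proof (cases "q = q'")
  case False
  have "edge_accel q q' $ i = ((q' - q) /\<^sub>R norm (q' - q)) $ i / edge_s q q'"
    by (simp add: edge_accel_def Let_def divide_inverse_commute)
  with edge_s_pos[OF False] abs_unit_component_le_edge_s[of q' q i] show ?thesis
    by simp
qed (simp add: edge_accel_def)

lemma edge_time_squared_scaleR_edge_accel: "(edge_time q q')\<^sup>2 *\<^sub>R edge_accel q q' = q' - q"
proof (cases "q = q'")
  case False
  define c where "c = edge_s q q' * norm (q' - q)"
  have "c \<noteq> 0" using False edge_s_pos[OF False] by (simp add: c_def)
  have "(edge_time q q')\<^sup>2 = c"
    by (simp add: c_def edge_time_def edge_s_nonneg)
  moreover have "edge_accel q q' = inverse c *\<^sub>R (q' - q)"
    by (simp add: c_def edge_accel_def Let_def mult.commute)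
  ultimately show ?thesis using \<open>c \<noteq> 0\<close> by simp
qed (simp add: edge_accel_def)

lemma abs_bang_bang_le_1: "\<bar>bang_bang qs t $ i\<bar> \<le> 1"
  by (induction qs t rule: bang_bang.induct) (auto simp: abs_edge_accel_le_1)

lemma bang_bang_time_nonneg: "0 \<le> bang_bang_time qs"
  by (induction qs rule: bang_bang_time.induct) (auto simp: edge_time_nonneg)

fun bang_bang_velocity :: "(real^'n) list \<Rightarrow> real \<Rightarrow> real^'n" where
  "bang_bang_velocity (q # q' # rest) t =
     (if t \<le> 2 * edge_time q q' then bang_velocity (edge_time q q') t *\<^sub>R edge_accel q q'
      else bang_bang_velocity (q' # rest) (t - 2 * edge_time q q'))"
| "bang_bang_velocity _ t = 0"

fun bang_bang_displacement :: "(real^'n) list \<Rightarrow> real \<Rightarrow> real^'n" where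
  "bang_bang_displacement (q # q' # rest) t =
     (if t \<le> 2 * edge_time q q' then bang_position (edge_time q q') t *\<^sub>R edge_accel q q'
      else (q' - q) + bang_bang_displacement (q' # rest) (t - 2 * edge_time q q'))"
| "bang_bang_displacement _ t = 0"

lemma bang_bang_velocity_at_0: "bang_bang_velocity qs 0 = 0"
  by (cases qs rule: bang_bang_time.cases) (simp_all add: bang_velocity_def edge_time_nonneg)

lemma bang_bang_displacement_at_0: "bang_bang_displacement qs 0 = 0"
  by (cases qs rule: bang_bang_time.cases) (simp_all add: bang_position_def edge_time_nonneg)

lemma bang_bang_velocity_after_edge:
  assumes "2 * edge_time q q' \<le> t"
  shows "bang_bang_velocity (q # q' # rest) t
    = bang_bang_velocity (q' # rest) (t - 2 * edge_time q q')"
proof (cases "t = 2 * edge_time q q'")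
  case True
  then show ?thesis
    by (simp add: bang_velocity_end edge_time_nonneg bang_bang_velocity_at_0)
qed (use assms in simp)

lemma bang_bang_displacement_after_edge:
  assumes "2 * edge_time q q' \<le> t"
  shows "bang_bang_displacement (q # q' # rest) t
    = (q' - q) + bang_bang_displacement (q' # rest) (t - 2 * edge_time q q')"
proof (cases "t = 2 * edge_time q q'")
  case True
  then show ?thesis
    by (simp add: bang_position_end edge_time_nonneg edge_time_squared_scaleR_edge_accel
        bang_bang_displacement_at_0)
qed (use assms in simp)

lemma has_integral_bang_bang:
  "0 \<le> t \<Longrightarrow> (bang_bang qs has_integral bang_bang_velocity qs t) {0..t}"
proof (induction qs arbitrary: t rule: bang_bang_time.induct)
  case (1 q q' rest)
  let ?\<tau> = "edge_time q q'" and ?a = "edge_accel q q'"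
  show ?case
  proof (rule has_integral_shifted_concat[where c = "2 * ?\<tau>"
        and f = "\<lambda>s. (if s < ?\<tau> then 1 else -1) *\<^sub>R ?a" and g = "bang_bang (q' # rest)"
        and G = "bang_bang_velocity (q' # rest)"])
    show "((\<lambda>s. (if s < ?\<tau> then 1 else -1) *\<^sub>R ?a)
        has_integral bang_bang_velocity (q # q' # rest) s) {0..s}" if "s \<in> {0..2 * ?\<tau>}" for s
      using has_integral_scaleR_left
          [OF has_integral_bang_velocity[OF edge_time_nonneg[of q q'], of s], of ?a] that
      by simp
    show "bang_bang_velocity (q # q' # rest) s = bang_bang_velocity (q # q' # rest) (2 * ?\<tau>)
        + bang_bang_velocity (q' # rest) (s - 2 * ?\<tau>)" if "2 * ?\<tau> < s" for s
      using that by (simp add: bang_bang_velocity_after_edge bang_bang_velocity_at_0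
          del: bang_bang_velocity.simps(1))
  qed (use "1" edge_time_nonneg[of q q'] in auto)
qed (auto intro: has_integral_spike_finite[OF finite.emptyI _ has_integral_0])

lemma has_integral_bang_bang_velocity:
  "0 \<le> t \<Longrightarrow> (bang_bang_velocity qs has_integral bang_bang_displacement qs t) {0..t}"
proof (induction qs arbitrary: t rule: bang_bang_time.induct)
  case (1 q q' rest)
  let ?\<tau> = "edge_time q q'" and ?a = "edge_accel q q'"
  show ?case
  proof (rule has_integral_shifted_concat[where c = "2 * ?\<tau>"
        and f = "\<lambda>s. bang_velocity ?\<tau> s *\<^sub>R ?a" and g = "bang_bang_velocity (q' # rest)"
        and G = "bang_bang_displacement (q' # rest)"])
    show "((\<lambda>s. bang_velocity ?\<tau> s *\<^sub>R ?a)
        has_integral bang_bang_displacement (q # q' # rest) s) {0..s}" if "s \<in> {0..2 * ?\<tau>}" for s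
      using has_integral_scaleR_left
          [OF has_integral_bang_position[OF edge_time_nonneg[of q q'], of s], of ?a] that
      by simp
    show "bang_bang_displacement (q # q' # rest) s
        = bang_bang_displacement (q # q' # rest) (2 * ?\<tau>)
          + bang_bang_displacement (q' # rest) (s - 2 * ?\<tau>)" if "2 * ?\<tau> < s" for s
      using that by (simp add: bang_bang_displacement_after_edge bang_bang_displacement_at_0
          del: bang_bang_displacement.simps(1))
  qed (use "1" edge_time_nonneg[of q q'] in auto)
qed (auto intro: has_integral_spike_finite[OF finite.emptyI _ has_integral_0])

lemma bang_bang_velocity_at_end: "bang_bang_velocity qs (bang_bang_time qs) = 0"
  by (induction qs rule: bang_bang_time.induct)
    (simp_all add: bang_bang_velocity_after_edge bang_bang_time_nonneg
      del: bang_bang_velocity.simps(1))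

lemma bang_bang_displacement_at_end:
  "qs \<noteq> [] \<Longrightarrow> bang_bang_displacement qs (bang_bang_time qs) = last qs - hd qs"
  by (induction qs rule: bang_bang_time.induct)
    (simp_all add: bang_bang_displacement_after_edge bang_bang_time_nonneg
      del: bang_bang_displacement.simps(1))

lemma bang_bang_displacement_in_segments:
  assumes "qs \<noteq> []" "hd qs \<in> S"
    and "\<forall>k < length qs - 1. closed_segment (qs ! k) (qs ! Suc k) \<subseteq> S"
    and "t \<in> {0..bang_bang_time qs}"
  shows "hd qs + bang_bang_displacement qs t \<in> S"
  using assms
proof (induction qs arbitrary: t rule: bang_bang_time.induct)
  case (1 q q' rest)
  let ?\<tau> = "edge_time q q'" and ?a = "edge_accel q q'"
  have segment: "closed_segment q q' \<subseteq> S"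
    and segments: "\<forall>k < length (q' # rest) - 1.
      closed_segment ((q' # rest) ! k) ((q' # rest) ! Suc k) \<subseteq> S"
    using "1.prems"(3) all_segments_Cons_Cons[where P = "\<lambda>x y. closed_segment x y \<subseteq> S"]
    by blast+
  show ?case
  proof (cases "t \<le> 2 * ?\<tau>")
    case True
    then have "q + bang_position ?\<tau> t *\<^sub>R ?a \<in> closed_segment q (q + ?\<tau>\<^sup>2 *\<^sub>R ?a)"
      using bang_position_bounds[of t ?\<tau>] "1.prems"(4) by (intro add_scaleR_in_closed_segment) auto
    then show ?thesis
      using True segment by (auto simp: edge_time_squared_scaleR_edge_accel)
  next
    case False
    have "q' + bang_bang_displacement (q' # rest) (t - 2 * ?\<tau>) \<in> S"
      using "1.IH"[of "t - 2 * ?\<tau>"] segment segments False "1.prems"(4) by auto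
    then show ?thesis
      using False
      by (simp add: bang_bang_displacement_after_edge del: bang_bang_displacement.simps(1))
  qed
qed auto

theorem proposition6:
  fixes Cfree :: "(real^'n) set" and qs :: "(real^'n) list" and qI qG :: "real^'n"
  assumes "open Cfree"
    and "qI \<in> Cfree" and "qG \<in> Cfree"
    and "qs \<noteq> []" and "hd qs = qI" and "last qs = qG"
    and "\<forall>k < length qs - 1. closed_segment (qs ! k) (qs ! Suc k) \<subseteq> Cfree"
  shows "bang_bang qs integrable_on {0..bang_bang_time qs}
    \<and> (\<forall>t \<in> {0..bang_bang_time qs}. \<forall>i. \<bar>bang_bang qs t $ i\<bar> \<le> 1)
    \<and> (\<forall>t \<in> {0..bang_bang_time qs}. di_position qI (bang_bang qs) t \<in> Cfree)
    \<and> di_position qI (bang_bang qs) (bang_bang_time qs) = qG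
    \<and> di_velocity (bang_bang qs) (bang_bang_time qs) = 0"
proof -
  have velocity: "di_velocity (bang_bang qs) t = bang_bang_velocity qs t" if "0 \<le> t" for t
    unfolding di_velocity_def using has_integral_bang_bang[OF that] by (rule integral_unique)
  have position: "di_position qI (bang_bang qs) t = qI + bang_bang_displacement qs t"
    if "0 \<le> t" for t
  proof -
    have "integral {0..t} (di_velocity (bang_bang qs)) = integral {0..t} (bang_bang_velocity qs)"
      by (rule integral_cong) (simp add: velocity)
    also have "\<dots> = bang_bang_displacement qs t"
      using has_integral_bang_bang_velocity[OF that] by (rule integral_unique)
    finally show ?thesis unfolding di_position_def by simp
  qed
  show ?thesis
    using has_integral_bang_bang[OF bang_bang_time_nonneg] abs_bang_bang_le_1
      bang_bang_displacement_in_segments[of qs Cfree] bang_bang_displacement_at_end[of qs]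
      bang_bang_velocity_at_end[of qs] velocity position bang_bang_time_nonneg[of qs] assms
    by auto
qed

end
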